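(* Let $U\subset\mathbb{R}^s$ be open, $X:U\to\mathbb{R}^{n+1}_1$ a spacelike embedding, $M=X(U)$, and $n^T$ a smooth future directed unit timelike normal field. Let $d\mathfrak{v}_{N_1(M)[n^T]}$ be the Riemannian volume element of $N_1(M)[n^T]$ and $d\mathfrak{v}_{\mathbb{S}^{n-1}_+}$ that of $\mathbb{S}^{n-1}_+$. Then at every $(p,\xi)\in N_1(M)[n^T]$, $$\big(\widetilde{\mathbb{LG}}(n^T)^*d\mathfrak{v}_{\mathbb{S}^{n-1}_+}\big)_{(p,\xi)}=|\widetilde K_\ell(n^T)(p,\xi)|\,d\mathfrak{v}_{N_1(M)[n^T](p,\xi)}.$$
   Context: $\mathbb{R}^{n+1}_1$ is $\mathbb{R}^{n+1}$ with $\langle x,y\rangle=-x_0y_0+\sum_{i=1}^n x_iy_i$; spacelike embedding means tangent spaces consist of vectors with $\langle v,v\rangle>0$. $\mathbb{S}^{n-1}_+=\{x:\langle x,x\rangle=0,x_0=1\}$ with the (positive definite) metric induced by $\langle\,,\rangle$; for nonzero lightlike $x$, $\widetilde x=x/x_0$. $N_p(M)$ is the pseudo-orthogonal complement of $T_pM$; $n^T(u)\in N_{X(u)}(M)$, $\langle n^T,n^T\rangle=-1$, $n^T_0>0$. $N_1(M)_p[n^T]=\{\xi\in N_p(M):\langle\xi,\xi\rangle=1,\langle\xi,n^T(p)\rangle=0\}$, $N_1(M)[n^T]=\bigcup_pN_1(M)_p[n^T]$. Its tangent space at $(p,\xi)$ is identified with $T_pM\oplus\{\eta\in N_p(M):\langle\eta,\xi\rangle=\langle\eta,n^T(p)\rangle=0\}\subset\mathbb{R}^{n+1}_1$,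 and it carries the Riemannian metric induced by $\langle\,,\rangle$. $\mathbb{R}^{n+1}_1=T_{(p,\xi)}N_1(M)[n^T]\oplus\mathrm{span}\{n^T(p),\xi\}$ and $\Pi^\tau$ denotes projection to the first summand. $\widetilde{\mathbb{LG}}(n^T)(p,\xi)=\widetilde{n^T(p)+\xi}$ and $\widetilde K_\ell(n^T)(p,\xi)=\det\big(-\Pi^\tau\circ d_{(p,\xi)}\widetilde{\mathbb{LG}}(n^T)\big)$. *)

theory Defs
  imports "HOL-Analysis.Analysis"
begin

fun iter_dd :: "'a list \<Rightarrow> ('a::real_normed_vector \<Rightarrow> 'b::real_normed_vector) \<Rightarrow> 'a \<Rightarrow> 'b" where
  "iter_dd [] f = f"
| "iter_dd (v # vs) f = (\<lambda>x. frechet_derivative (iter_dd vs f) (at x) v)"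

definition smooth_on :: "'a::real_normed_vector set \<Rightarrow> ('a \<Rightarrow> 'b::real_normed_vector) \<Rightarrow> bool" where
  "smooth_on S f \<longleftrightarrow> (\<forall>vs. \<forall>x\<in>S. iter_dd vs f differentiable (at x))"

section \<open>Lorentz-Minkowski space R^{n+1}_1 = real \<times> real^'n  (x_0 = fst x)\<close>

type_synonym 'n lor = "real \<times> (real ^ 'n)"

definition lprod :: "'n::finite lor \<Rightarrow> 'n lor \<Rightarrow> real" where
  "lprod x y = - fst x * fst y + snd x \<bullet> snd y"

definition ltilde :: "'n::finite lor \<Rightarrow> 'n lor" where
  "ltilde x = (1 / fst x) *\<^sub>R x"

definition ndet :: "nat \<Rightarrow> (nat \<Rightarrow> nat \<Rightarrow> real) \<Rightarrow> real" where
  "ndet k A = (\<Sum>p | p permutes {..<k}. of_int (sign p) * (\<Prod>i<k. A i (p i)))"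

definition sub_det :: "'a::euclidean_space set \<Rightarrow> ('a \<Rightarrow> 'a) \<Rightarrow> real" where
  "sub_det V f =
     (let k = dim V;
          b = (SOME b. (\<forall>i<k. b i \<in> V) \<and> inj_on b {..<k} \<and> independent (b ` {..<k})
                        \<and> span (b ` {..<k}) = V);
          A = (SOME A. \<forall>j<k. f (b j) = (\<Sum>i<k. A i j *\<^sub>R b i))
      in ndet k A)"

definition vol_elem :: "nat \<Rightarrow> ('v \<Rightarrow> 'v \<Rightarrow> real) \<Rightarrow> (nat \<Rightarrow> 'v) \<Rightarrow> real" where
  "vol_elem k g t = sqrt (ndet k (\<lambda>i j. g (t i) (t j)))"

definition dX :: "('s::euclidean_space \<Rightarrow> 'n::finite lor) \<Rightarrow> 's \<Rightarrow> 's \<Rightarrow> 'n lor" where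
  "dX X u = frechet_derivative X (at u)"

definition spacelike_embedding :: "'s::euclidean_space set \<Rightarrow> ('s \<Rightarrow> 'n::finite lor) \<Rightarrow> bool" where
  "spacelike_embedding U X \<longleftrightarrow>
     open U \<and> smooth_on U X \<and> inj_on X U \<and> continuous_on (X ` U) (inv_into U X) \<and>
     (\<forall>u\<in>U. \<forall>a. a \<noteq> 0 \<longrightarrow> lprod (dX X u a) (dX X u a) > 0)"

definition tangent_sp :: "('s::euclidean_space \<Rightarrow> 'n::finite lor) \<Rightarrow> 's \<Rightarrow> 'n lor set" where
  "tangent_sp X u = range (dX X u)"

definition normal_sp :: "('s::euclidean_space \<Rightarrow> 'n::finite lor) \<Rightarrow> 's \<Rightarrow> 'n lor set" where
  "normal_sp X u = {x. \<forall>v\<in>tangent_sp X u. lprod x v = 0}"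

definition future_unit_timelike_normal ::
  "'s::euclidean_space set \<Rightarrow> ('s \<Rightarrow> 'n::finite lor) \<Rightarrow> ('s \<Rightarrow> 'n lor) \<Rightarrow> bool" where
  "future_unit_timelike_normal U X nT \<longleftrightarrow> smooth_on U nT \<and>
     (\<forall>u\<in>U. nT u \<in> normal_sp X u \<and> lprod (nT u) (nT u) = -1 \<and> fst (nT u) > 0)"

definition N1_fib :: "('s::euclidean_space \<Rightarrow> 'n::finite lor) \<Rightarrow> ('s \<Rightarrow> 'n lor) \<Rightarrow> 's \<Rightarrow> 'n lor set" where
  "N1_fib X nT u = {\<xi> \<in> normal_sp X u. lprod \<xi> \<xi> = 1 \<and> lprod \<xi> (nT u) = 0}"

definition N1 :: "'s::euclidean_space set \<Rightarrow> ('s \<Rightarrow> 'n::finite lor) \<Rightarrow> ('s \<Rightarrow> 'n lor) \<Rightarrow> ('n lor \<times> 'n lor) set" where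
  "N1 U X nT = {(X u, \<xi>) | u \<xi>. u \<in> U \<and> \<xi> \<in> N1_fib X nT u}"

definition LGt :: "'s::euclidean_space set \<Rightarrow> ('s \<Rightarrow> 'n::finite lor) \<Rightarrow> ('s \<Rightarrow> 'n lor) \<Rightarrow> 'n lor \<times> 'n lor \<Rightarrow> 'n lor" where
  "LGt U X nT = (\<lambda>(p, \<xi>). ltilde (nT (inv_into U X p) + \<xi>))"

definition N1_curve :: "'s::euclidean_space set \<Rightarrow> ('s \<Rightarrow> 'n::finite lor) \<Rightarrow> ('s \<Rightarrow> 'n lor) \<Rightarrow> 's \<Rightarrow> 'n lor
    \<Rightarrow> (real \<Rightarrow> 's) \<Rightarrow> (real \<Rightarrow> 'n lor) \<Rightarrow> bool" where
  "N1_curve U X nT u \<xi> c e \<longleftrightarrow> c 0 = u \<and> e 0 = \<xi> \<and> (\<forall>t. c t \<in> U \<and> e t \<in> N1_fib X nT (c t)) \<and>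
     c differentiable (at 0) \<and> e differentiable (at 0)"

definition TN1 :: "'s::euclidean_space set \<Rightarrow> ('s \<Rightarrow> 'n::finite lor) \<Rightarrow> ('s \<Rightarrow> 'n lor) \<Rightarrow> 's \<Rightarrow> 'n lor
    \<Rightarrow> ('n lor \<times> 'n lor) set" where
  "TN1 U X nT u \<xi> = {(vector_derivative (X \<circ> c) (at 0), vector_derivative e (at 0)) | c e.
      N1_curve U X nT u \<xi> c e}"

definition dLGt :: "'s::euclidean_space set \<Rightarrow> ('s \<Rightarrow> 'n::finite lor) \<Rightarrow> ('s \<Rightarrow> 'n lor) \<Rightarrow> 's \<Rightarrow> 'n lor
    \<Rightarrow> 'n lor \<times> 'n lor \<Rightarrow> 'n lor" where
  "dLGt U X nT u \<xi> t = (SOME d. \<exists>c e. N1_curve U X nT u \<xi> c e \<and>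
      t = (vector_derivative (X \<circ> c) (at 0), vector_derivative e (at 0)) \<and>
      d = vector_derivative (\<lambda>s. LGt U X nT (X (c s), e s)) (at 0))"

text \<open>The subspace  T_pM (+) {eta in N_p(M). <eta,xi> = <eta,n^T(p)> = 0}  of R^{n+1}_1
  with which T_{(p,xi)} N_1(M)[n^T] is identified.\<close>
definition TN1_id :: "('s::euclidean_space \<Rightarrow> 'n::finite lor) \<Rightarrow> ('s \<Rightarrow> 'n lor) \<Rightarrow> 's \<Rightarrow> 'n lor \<Rightarrow> 'n lor set" where
  "TN1_id X nT u \<xi> = {v + \<eta> | v \<eta>. v \<in> tangent_sp X u \<and>
      \<eta> \<in> normal_sp X u \<and> lprod \<eta> \<xi> = 0 \<and> lprod \<eta> (nT u) = 0}"

definition Pi_tau :: "('s::euclidean_space \<Rightarrow> 'n::finite lor) \<Rightarrow> ('s \<Rightarrow> 'n lor) \<Rightarrow> 's \<Rightarrow> 'n lor \<Rightarrow> 'n lor \<Rightarrow> 'n lor" where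
  "Pi_tau X nT u \<xi> z = (THE v. v \<in> TN1_id X nT u \<xi> \<and> z - v \<in> span {nT u, \<xi>})"

end

theory Submission
  imports Defs "Jordan_Normal_Form.Determinant"
begin

text \<open>Under the identification \<open>\<iota>\<close>, the tangent space of \<open>N\<^sub>1(M)[n\<^sup>T]\<close> corresponds to
  \<open>W = span{n\<^sup>T(p), \<xi>}\<^sup>\<bottom>\<close>, a spacelike space of dimension \<open>n - 1\<close>. The derivative of
  \<open>LG~\<close> is Lorentz-orthogonal to the null vector \<open>n\<^sup>T(p) + \<xi>\<close>, and on that hyperplane \<open>\<Pi>\<^sup>\<tau>\<close>
  only adds multiples of \<open>n\<^sup>T(p) + \<xi>\<close>, so it preserves the Lorentz product. Hence the Gram
  matrix of the vectors \<open>dLG~(t\<^sub>i)\<close> equals that of \<open>F(\<iota> t\<^sub>i)\<close> for the endomorphism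
  \<open>F = -\<Pi>\<^sup>\<tau> \<circ> dLG~ \<circ> \<iota>\<^sup>-\<^sup>1\<close> of \<open>W\<close>, and a Gram determinant scales by \<open>det(F)\<^sup>2\<close>.
  That \<open>\<iota>\<^sup>-\<^sup>1\<close> is linear on \<open>W\<close> follows from a dimension count: the velocities of curves in
  \<open>N\<^sub>1(M)[n\<^sup>T]\<close> lie in the solution space of the linearised constraints, which is at most
  \<open>(n - 1)\<close>-dimensional, so \<open>\<iota>\<close> is injective on it.\<close>

lemma lprod_eq_inner: "lprod x y = inner (- fst x, snd x) y"
  by (simp add: lprod_def inner_prod_def)

lemma bounded_bilinear_lprod: "bounded_bilinear (lprod :: 'n::finite lor \<Rightarrow> _)"
proof -
  have "bounded_linear (\<lambda>x::'n lor. (- fst x, snd x))"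
    by (intro bounded_linear_Pair bounded_linear_minus bounded_linear_fst bounded_linear_snd)
  from bounded_bilinear.comp1[OF bounded_bilinear_inner this]
  show ?thesis by (simp add: lprod_eq_inner[abs_def])
qed

interpretation lp: bounded_bilinear "lprod :: 'n::finite lor \<Rightarrow> _"
  by (rule bounded_bilinear_lprod)

lemma lprod_commute: "lprod x y = lprod y x"
  by (simp add: lprod_def inner_commute)

lemma ndet_eq_det: "ndet k A = Determinant.det (mat k k (\<lambda>(i, j). A i j))"
proof -
  have "Determinant.det (mat k k (\<lambda>(i, j). A i j)) =
     (\<Sum>p\<in>{p. p permutes {0..<k}}. signof p * (\<Prod>i = 0..<k. A i (p i)))"
    unfolding Determinant.det_def
    by (auto intro!: sum.cong prod.cong simp: permutes_in_image)
  then show ?thesis unfolding ndet_def by (simp add: lessThan_atLeast0)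
qed

lemma ndet_cong:
  assumes "\<And>i j. i < k \<Longrightarrow> j < k \<Longrightarrow> A i j = B i j"
  shows "ndet k A = ndet k B"
  unfolding ndet_def
proof (intro sum.cong refl arg_cong2[where f = "(*)"] prod.cong)
  fix p i assume "p \<in> {p. p permutes {..<k}}" "i \<in> {..<k}"
  then show "A i (p i) = B i (p i)"
    using assms permutes_in_image by fastforce
qed

lemma ndet_mult: "ndet k (\<lambda>i j. \<Sum>l<k. A i l * B l j) = ndet k A * ndet k B"
proof -
  have "mat k k (\<lambda>(i, j). \<Sum>l<k. A i l * B l j) = mat k k (\<lambda>(i, j). A i j) * mat k k (\<lambda>(i, j). B i j)"
    by (rule eq_matI) (auto simp: scalar_prod_def lessThan_atLeast0 intro!: sum.cong)
  then show ?thesis unfolding ndet_eq_det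
    by (simp add: det_mult[of _ k])
qed

lemma ndet_transpose: "ndet k (\<lambda>i j. A j i) = ndet k A"
proof -
  have "mat k k (\<lambda>(i, j). A j i) = transpose_mat (mat k k (\<lambda>(i, j). A i j))"
    by (rule eq_matI) auto
  then show ?thesis unfolding ndet_eq_det by (simp add: det_transpose[of _ k])
qed

lemma ndet_gram_change_basis:
  assumes "bounded_bilinear g"
    and v: "\<And>i. i < k \<Longrightarrow> v i = (\<Sum>p<k. M p i *\<^sub>R b p)"
  shows "ndet k (\<lambda>i l. g (v i) (v l)) = ndet k M * ndet k (\<lambda>p q. g (b p) (b q)) * ndet k M"
proof -
  interpret g: bounded_bilinear g by fact
  have "ndet k (\<lambda>i l. g (v i) (v l)) = ndet k (\<lambda>i l. \<Sum>p<k. M p i * (\<Sum>q<k. g (b p) (b q) * M q l))"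
  proof (rule ndet_cong)
    fix i l assume il: "i < k" "l < k"
    have "g (v i) (v l) = (\<Sum>p<k. g (M p i *\<^sub>R b p) (\<Sum>q<k. M q l *\<^sub>R b q))"
      unfolding v[OF il(1)] v[OF il(2)] g.sum_left ..
    also have "\<dots> = (\<Sum>p<k. \<Sum>q<k. M q l * (M p i * g (b p) (b q)))"
      unfolding g.sum_right g.scaleR_left g.scaleR_right real_scaleR_def ..
    also have "\<dots> = (\<Sum>p<k. M p i * (\<Sum>q<k. g (b p) (b q) * M q l))"
      unfolding sum_distrib_left by (intro sum.cong refl) (simp only: mult_ac)
    finally show "g (v i) (v l) = (\<Sum>p<k. M p i * (\<Sum>q<k. g (b p) (b q) * M q l))" .
  qed
  also have "\<dots> = ndet k (\<lambda>i p. M p i) * ndet k (\<lambda>p l. \<Sum>q<k. g (b p) (b q) * M q l)"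
    by (rule ndet_mult)
  also have "\<dots> = ndet k M * (ndet k (\<lambda>p q. g (b p) (b q)) * ndet k M)"
    by (simp only: ndet_transpose[of k M] ndet_mult[of k "\<lambda>p q. g (b p) (b q)" M])
  finally show ?thesis by (simp only: mult.assoc)
qed

lemma span_finite_sum_repr:
  fixes b :: "nat \<Rightarrow> 'a::real_vector"
  assumes "inj_on b {..<m}" "x \<in> span (b ` {..<m})"
  obtains c where "x = (\<Sum>i<m. c i *\<^sub>R b i)"
proof -
  from assms(2) obtain c where "x = (\<Sum>v\<in>b ` {..<m}. c v *\<^sub>R v)"
    by (auto simp: span_finite)
  also have "\<dots> = (\<Sum>i<m. c (b i) *\<^sub>R b i)"
    by (simp add: sum.reindex[OF assms(1)])
  finally show thesis using that[of "c \<circ> b"] by simp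
qed

lemma ex_enumerated_basis:
  fixes W :: "'a::euclidean_space set"
  assumes "subspace W"
  shows "\<exists>b. (\<forall>i<dim W. b i \<in> W) \<and> inj_on b {..<dim W} \<and> independent (b ` {..<dim W})
              \<and> span (b ` {..<dim W}) = W"
proof -
  obtain B where B: "B \<subseteq> W" "independent B" "W \<subseteq> span B" "card B = dim W"
    using basis_exists[of W] by blast
  have "finite B" using B(2) by (simp add: finiteI_independent)
  then obtain h where h: "bij_betw h {0..<card B} B" using ex_bij_betw_nat_finite by blast
  have "span B = W" using B assms by (simp add: span_subspace)
  with h B show ?thesis
    by (intro exI[of _ h]) (auto simp: bij_betw_def lessThan_atLeast0)
qed

lemma sub_det_matrix:
  fixes W :: "'a::euclidean_space set"
  assumes "subspace W" "f ` W \<subseteq> W"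
  obtains b A where "\<forall>i<dim W. b i \<in> W" "inj_on b {..<dim W}" "span (b ` {..<dim W}) = W"
    "\<forall>j<dim W. f (b j) = (\<Sum>i<dim W. A i j *\<^sub>R b i)" "sub_det W f = ndet (dim W) A"
proof -
  define m where "m = dim W"
  define b where "b = (SOME b. (\<forall>i<m. b i \<in> W) \<and> inj_on b {..<m} \<and> independent (b ` {..<m})
                                \<and> span (b ` {..<m}) = W)"
  have b: "\<forall>i<m. b i \<in> W" "inj_on b {..<m}" "span (b ` {..<m}) = W"
    using someI_ex[OF ex_enumerated_basis[OF assms(1)]] unfolding b_def m_def by auto
  have "\<exists>c. f (b j) = (\<Sum>i<m. c i *\<^sub>R b i)" if "j < m" for j
  proof -
    have "f (b j) \<in> span (b ` {..<m})" using b that assms(2) by (auto intro: span_base)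
    with b(2) show ?thesis by (blast elim: span_finite_sum_repr)
  qed
  then have "\<forall>j\<in>{..<m}. \<exists>c. f (b j) = (\<Sum>i<m. c i *\<^sub>R b i)" by blast
  from bchoice[OF this] obtain c where "\<forall>j\<in>{..<m}. f (b j) = (\<Sum>i<m. c j i *\<^sub>R b i)" ..
  then have "\<exists>A. \<forall>j<m. f (b j) = (\<Sum>i<m. A i j *\<^sub>R b i)" by auto
  from someI_ex[OF this] that[of b] b show thesis
    unfolding sub_det_def Let_def m_def[symmetric] b_def[symmetric] by blast
qed

lemma sub_det_cong:
  fixes W :: "'a::euclidean_space set"
  assumes "subspace W" "\<And>z. z \<in> W \<Longrightarrow> f z = g z"
  shows "sub_det W f = sub_det W g"
proof -
  define m where "m = dim W"
  define b where "b = (SOME b. (\<forall>i<m. b i \<in> W) \<and> inj_on b {..<m} \<and> independent (b ` {..<m})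
                                \<and> span (b ` {..<m}) = W)"
  have "\<forall>i<m. b i \<in> W"
    using someI_ex[OF ex_enumerated_basis[OF assms(1)]] unfolding b_def m_def by auto
  then have "\<forall>j<m. f (b j) = g (b j)" using assms(2) by blast
  then show ?thesis unfolding sub_det_def Let_def m_def[symmetric] b_def[symmetric] by simp
qed

lemma vol_elem_cong:
  assumes "\<And>i. i < k \<Longrightarrow> t i = t' i"
  shows "vol_elem k g t = vol_elem k g t'"
  unfolding vol_elem_def by (intro arg_cong[where f = sqrt] ndet_cong) (simp add: assms)

lemma vol_elem_linear_image:
  fixes W :: "'a::euclidean_space set"
  assumes "bounded_bilinear g" "linear f" "subspace W" "f ` W \<subseteq> W" "\<forall>i<dim W. w i \<in> W"
  shows "vol_elem (dim W) g (\<lambda>i. f (w i)) = \<bar>sub_det W f\<bar> * vol_elem (dim W) g w"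
proof -
  define m where "m = dim W"
  obtain b A where b: "\<forall>i<m. b i \<in> W" "inj_on b {..<m}" "span (b ` {..<m}) = W"
    and A: "\<forall>j<m. f (b j) = (\<Sum>i<m. A i j *\<^sub>R b i)" and sd: "sub_det W f = ndet m A"
    using sub_det_matrix[OF assms(3,4)] unfolding m_def by blast
  have "\<exists>c. w i = (\<Sum>p<m. c p *\<^sub>R b p)" if "i < m" for i
  proof -
    have "w i \<in> span (b ` {..<m})" using b that assms(5) by (auto simp: m_def intro: span_base)
    with b(2) show ?thesis by (blast elim: span_finite_sum_repr)
  qed
  then have "\<forall>i\<in>{..<m}. \<exists>c. w i = (\<Sum>p<m. c p *\<^sub>R b p)" by blast
  from bchoice[OF this] obtain C' where "\<forall>i\<in>{..<m}. w i = (\<Sum>p<m. C' i p *\<^sub>R b p)" ..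
  then obtain C where wC: "\<And>i. i < m \<Longrightarrow> w i = (\<Sum>p<m. C p i *\<^sub>R b p)" by fastforce
  have fwC: "f (w i) = (\<Sum>p<m. (\<Sum>j<m. A p j * C j i) *\<^sub>R b p)" if "i < m" for i
  proof -
    have "f (w i) = (\<Sum>j<m. C j i *\<^sub>R f (b j))"
      by (simp add: wC[OF that] linear_sum[OF assms(2)] linear_cmul[OF assms(2)])
    also have "\<dots> = (\<Sum>j<m. \<Sum>p<m. (A p j * C j i) *\<^sub>R b p)"
      using A by (simp add: scaleR_sum_right mult.commute)
    also have "\<dots> = (\<Sum>p<m. (\<Sum>j<m. A p j * C j i) *\<^sub>R b p)"
      by (subst sum.swap) (simp add: scaleR_sum_left)
    finally show ?thesis .
  qed
  define G where "G = ndet m (\<lambda>p q. g (b p) (b q))"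
  have gram_w: "ndet m (\<lambda>i l. g (w i) (w l)) = ndet m C * G * ndet m C"
    unfolding G_def by (rule ndet_gram_change_basis[OF assms(1) wC])
  have gram_fw: "ndet m (\<lambda>i l. g (f (w i)) (f (w l))) = (ndet m A * ndet m C) * G * (ndet m A * ndet m C)"
    unfolding G_def using ndet_gram_change_basis[OF assms(1) fwC] by (simp only: ndet_mult)
  have "vol_elem m g (\<lambda>i. f (w i)) = sqrt ((ndet m A)\<^sup>2 * (ndet m C * G * ndet m C))"
    unfolding vol_elem_def gram_fw by (simp add: power2_eq_square mult_ac)
  also have "\<dots> = \<bar>ndet m A\<bar> * vol_elem m g w"
    unfolding vol_elem_def gram_w real_sqrt_mult by simp
  finally show ?thesis by (simp add: sd m_def)
qed

lemma inj_on_if_dim_le_dim_image: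
  fixes f :: "'a::euclidean_space \<Rightarrow> 'b::euclidean_space"
  assumes lin: "linear f" and "subspace V" and le: "dim V \<le> dim (f ` V)"
  shows "inj_on f V"
proof -
  obtain B where B: "B \<subseteq> V" "independent B" "V \<subseteq> span B" "card B = dim V"
    using basis_exists[of V] by blast
  have fin: "finite B" using B(2) by (simp add: finiteI_independent)
  have spB: "span B = V" using B assms(2) by (simp add: span_subspace)
  have sp: "span (f ` B) = f ` V" using span_linear_image[OF lin, of B] spB by simp
  have c1: "card (f ` B) \<le> card B" using fin by (rule card_image_le)
  have ind: "independent (f ` B)"
    by (rule card_le_dim_spanning[of _ "f ` V"]) (use B sp fin c1 le in auto)
  have "dim (f ` V) = card (f ` B)"
    using dim_eq_card_independent[OF ind] sp by (metis dim_span)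
  then have "inj_on f B" using c1 le B(4) by (intro eq_card_imp_inj_on[OF fin]) simp
  then show ?thesis
    using linear_inj_on_span_iff_independent_image[OF lin ind] spB by simp
qed

locale spacelike_linear =
  fixes D :: "'a::euclidean_space \<Rightarrow> 'n::finite lor"
  assumes linear: "linear D"
    and positive: "a \<noteq> 0 \<Longrightarrow> lprod (D a) (D a) > 0"
begin

lemma lprod_right_expand: "lprod z (D w) = (\<Sum>i\<in>Basis. (w \<bullet> i) * lprod z (D i))"
proof -
  have "D w = D (\<Sum>i\<in>Basis. (w \<bullet> i) *\<^sub>R i)" by (simp add: euclidean_representation)
  also have "\<dots> = (\<Sum>i\<in>Basis. (w \<bullet> i) *\<^sub>R D i)"
    by (simp add: linear_sum[OF linear] linear_cmul[OF linear])
  finally have "D w = (\<Sum>i\<in>Basis. (w \<bullet> i) *\<^sub>R D i)" .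
  then show ?thesis by (simp add: lp.sum_right lp.scaleR_right)
qed

text \<open>The orthogonal projection onto the image of \<open>D\<close> exists because the Gram map
  \<open>v \<mapsto> (\<langle>D v, D i\<rangle>)\<^sub>i\<close> is injective, hence surjective.\<close>
lemma ex_orthogonal_coord: "\<exists>a. \<forall>w. lprod (z - D a) (D w) = 0"
proof -
  define G where "G v = (\<Sum>i\<in>Basis. lprod (D v) (D i) *\<^sub>R i)" for v
  have linG: "linear G"
    by (rule linearI) (simp_all add: G_def linear_add[OF linear] linear_cmul[OF linear] lp.add_left
        lp.scaleR_left scaleR_add_left sum.distrib scaleR_sum_right)
  have G_inner: "G v \<bullet> i = lprod (D v) (D i)" if "i \<in> Basis" for v i
    using that by (simp add: G_def inner_sum_left inner_Basis if_distrib cong: if_cong)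
  have "inj G"
  proof (subst linear_injective_0[OF linG], intro allI impI)
    fix v assume "G v = 0"
    then have "lprod (D v) (D i) = 0" if "i \<in> Basis" for i
      using G_inner[OF that, of v] by simp
    then have "lprod (D v) (D v) = 0" by (simp add: lprod_right_expand[of "D v" v])
    then show "v = 0" using positive by force
  qed
  then obtain a where a: "G a = (\<Sum>i\<in>Basis. lprod z (D i) *\<^sub>R i)"
    using linear_injective_imp_surjective[OF linG] by (metis surjD)
  have "lprod (D a) (D i) = lprod z (D i)" if "i \<in> Basis" for i
    using G_inner[OF that, of a] that
    by (simp add: a inner_sum_left inner_Basis if_distrib cong: if_cong)
  then have "lprod (z - D a) (D w) = 0" for w
    by (simp add: lprod_right_expand[of z w] lprod_right_expand[of "D a" w] lp.diff_left)
  then show ?thesis by blast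
qed

definition tan_coord :: "'n lor \<Rightarrow> 'a" where
  "tan_coord z = (SOME a. \<forall>w. lprod (z - D a) (D w) = 0)"

lemma lprod_diff_tan_coord: "lprod (z - D (tan_coord z)) (D w) = 0"
  using someI_ex[OF ex_orthogonal_coord[of z]] unfolding tan_coord_def by blast

lemma tan_coord_unique:
  assumes "\<And>w. lprod (z - D a) (D w) = 0"
  shows "tan_coord z = a"
proof -
  have "lprod (D (a - tan_coord z)) (D w) = 0" for w
    using lprod_diff_tan_coord[of z w] assms[of w]
    by (simp add: linear_diff[OF linear] lp.diff_left)
  then have "lprod (D (a - tan_coord z)) (D (a - tan_coord z)) = 0" by blast
  then show ?thesis using positive[of "a - tan_coord z"] by force
qed

lemma tan_coord_apply [simp]: "tan_coord (D a) = a"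
  by (rule tan_coord_unique) (simp add: lp.zero_left)

lemma linear_tan_coord: "linear tan_coord"
proof (rule linearI)
  fix x y show "tan_coord (x + y) = tan_coord x + tan_coord y"
  proof (rule tan_coord_unique)
    fix w
    have "x + y - D (tan_coord x + tan_coord y) = (x - D (tan_coord x)) + (y - D (tan_coord y))"
      by (simp add: linear_add[OF linear])
    then show "lprod (x + y - D (tan_coord x + tan_coord y)) (D w) = 0"
      by (simp only: lp.add_left lprod_diff_tan_coord add_0)
  qed
next
  fix r x show "tan_coord (r *\<^sub>R x) = r *\<^sub>R tan_coord x"
  proof (rule tan_coord_unique)
    fix w
    have "r *\<^sub>R x - D (r *\<^sub>R tan_coord x) = r *\<^sub>R (x - D (tan_coord x))"
      by (simp add: linear_cmul[OF linear] scaleR_diff_right)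
    then show "lprod (r *\<^sub>R x - D (r *\<^sub>R tan_coord x)) (D w) = 0"
      by (simp only: lp.scaleR_left lprod_diff_tan_coord scaleR_zero_right)
  qed
qed

end

lemma in_span_pair_iff: "z \<in> span {a, b} \<longleftrightarrow> (\<exists>p q. z = p *\<^sub>R a + q *\<^sub>R b)"
proof
  assume "z \<in> span {a, b}"
  then obtain p where "z - p *\<^sub>R a \<in> span {b}" unfolding span_breakdown_eq by blast
  then obtain q where "z - p *\<^sub>R a = q *\<^sub>R b" unfolding span_singleton by blast
  then show "\<exists>p q. z = p *\<^sub>R a + q *\<^sub>R b" by (metis diff_add_cancel add.commute)
next
  assume "\<exists>p q. z = p *\<^sub>R a + q *\<^sub>R b"
  then show "z \<in> span {a, b}" by (auto intro: span_add span_scale span_base)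
qed

definition lorth :: "'n::finite lor \<Rightarrow> 'n lor \<Rightarrow> 'n lor set" where
  "lorth a b = {z. lprod z a = 0 \<and> lprod z b = 0}"

text \<open>For a unit timelike \<open>a\<close> and a unit spacelike \<open>b\<close> orthogonal to it, this is the projection
  \<open>\<Pi>\<^sup>\<tau>\<close> onto \<open>lorth a b\<close> along \<open>span {a, b}\<close>; the sign of the \<open>a\<close>-term comes from
  \<open>\<langle>a, a\<rangle> = -1\<close>.\<close>
definition lproj :: "'n::finite lor \<Rightarrow> 'n lor \<Rightarrow> 'n lor \<Rightarrow> 'n lor" where
  "lproj a b z = z + lprod z a *\<^sub>R a - lprod z b *\<^sub>R b"

lemma subspace_lorth: "subspace (lorth a b)"
  unfolding subspace_def lorth_def by (simp add: lp.add_left lp.scaleR_left lp.zero_left)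

lemma linear_lproj: "linear (lproj a b)"
  by (rule linearI) (simp_all add: lproj_def lp.add_left lp.scaleR_left algebra_simps)

locale lorentz_pair =
  fixes \<nu> \<xi> :: "'n::finite lor"
  assumes timelike: "lprod \<nu> \<nu> = -1"
    and spacelike: "lprod \<xi> \<xi> = 1"
    and orthogonal: "lprod \<xi> \<nu> = 0"
begin

lemma orthogonal': "lprod \<nu> \<xi> = 0"
  using orthogonal by (simp add: lprod_commute)

lemmas pair_lprod = timelike spacelike orthogonal orthogonal'

lemma lproj_in_lorth: "lproj \<nu> \<xi> z \<in> lorth \<nu> \<xi>"
  by (simp add: lproj_def lorth_def lp.add_left lp.diff_left lp.scaleR_left pair_lprod)

lemma diff_lproj_in_span: "z - lproj \<nu> \<xi> z \<in> span {\<nu>, \<xi>}"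
proof -
  have "z - lproj \<nu> \<xi> z = (- lprod z \<nu>) *\<^sub>R \<nu> + lprod z \<xi> *\<^sub>R \<xi>"
    by (simp add: lproj_def)
  then show ?thesis unfolding in_span_pair_iff by blast
qed

lemma lproj_unique:
  assumes "v \<in> lorth \<nu> \<xi>" "z - v \<in> span {\<nu>, \<xi>}"
  shows "v = lproj \<nu> \<xi> z"
proof -
  obtain p q where pq: "z - v = p *\<^sub>R \<nu> + q *\<^sub>R \<xi>"
    using assms(2) by (auto simp: in_span_pair_iff)
  have "lprod (z - v) \<nu> = - p" "lprod (z - v) \<xi> = q"
    by (simp_all add: pq lp.add_left lp.scaleR_left pair_lprod)
  then have "lprod z \<nu> = - p" "lprod z \<xi> = q"
    using assms(1) by (auto simp: lorth_def lp.diff_left)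
  then show ?thesis using pq by (simp add: lproj_def algebra_simps)
qed

lemma dim_lorth: "dim (lorth \<nu> \<xi>) = CARD('n) - 1"
proof -
  define S where "S = span {\<nu>, \<xi>}"
  have meet: "lorth \<nu> \<xi> \<inter> S = {0}"
  proof safe
    fix z assume "z \<in> lorth \<nu> \<xi>" "z \<in> S"
    then obtain p q where pq: "z = p *\<^sub>R \<nu> + q *\<^sub>R \<xi>" "lprod z \<nu> = 0" "lprod z \<xi> = 0"
      by (auto simp: S_def in_span_pair_iff lorth_def)
    then have "p = 0" "q = 0" by (simp_all add: lp.add_left lp.scaleR_left pair_lprod)
    then show "z = 0" using pq by simp
  qed (simp_all add: subspace_0[OF subspace_lorth] S_def span_zero)
  have sum: "{x + y |x y. x \<in> lorth \<nu> \<xi> \<and> y \<in> S} = UNIV"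
  proof -
    have "z = lproj \<nu> \<xi> z + (z - lproj \<nu> \<xi> z)" for z by simp
    then show ?thesis using lproj_in_lorth diff_lproj_in_span unfolding S_def by blast
  qed
  have dim_S: "dim S = 2"
  proof -
    have "\<nu> \<notin> span {\<xi>}"
    proof
      assume "\<nu> \<in> span {\<xi>}"
      then obtain k where "\<nu> = k *\<^sub>R \<xi>" by (auto simp: span_singleton)
      then have "lprod \<nu> \<nu> = k * k" by (simp add: lp.scaleR_left lp.scaleR_right spacelike)
      then show False using timelike by (smt (verit) zero_le_square)
    qed
    moreover have "independent {\<xi>}" using spacelike by (auto simp: lp.zero_left)
    ultimately have "independent {\<nu>, \<xi>}" by (rule independent_insertI)
    moreover have "\<nu> \<noteq> \<xi>" using timelike spacelike by auto
    ultimately show ?thesis using dim_eq_card_independent by (fastforce simp: S_def)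
  qed
  have "dim (UNIV :: 'n lor set) = 1 + CARD('n)" by simp
  then show ?thesis
    using dim_sums_Int[OF subspace_lorth[of \<nu> \<xi>] subspace_span[of "{\<nu>, \<xi>}", folded S_def]]
      meet sum dim_S by simp
qed

lemma null_lprod: "lprod (\<nu> + \<xi>) (\<nu> + \<xi>) = 0"
  by (simp add: lp.add_left lp.add_right pair_lprod)

lemma fst_null_nonzero: "fst (\<nu> + \<xi>) \<noteq> 0"
proof
  assume fst0: "fst (\<nu> + \<xi>) = 0"
  then have "snd (\<nu> + \<xi>) \<bullet> snd (\<nu> + \<xi>) = 0" using null_lprod by (simp add: lprod_def)
  with fst0 have "\<nu> + \<xi> = 0" by (simp add: prod_eq_iff)
  then have "\<xi> = - \<nu>" by (simp add: eq_neg_iff_add_eq_0 add.commute)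
  then show False using orthogonal timelike by (simp add: lp.minus_left)
qed

lemma lprod_lproj:
  assumes "lprod x (\<nu> + \<xi>) = 0" "lprod y (\<nu> + \<xi>) = 0"
  shows "lprod (lproj \<nu> \<xi> x) (lproj \<nu> \<xi> y) = lprod x y"
proof -
  define l where "l = \<nu> + \<xi>"
  have "lprod x \<xi> = - lprod x \<nu>" "lprod y \<xi> = - lprod y \<nu>"
    using assms by (simp_all add: lp.add_right eq_neg_iff_add_eq_0 add.commute)
  then have "lproj \<nu> \<xi> x = x + lprod x \<nu> *\<^sub>R l" "lproj \<nu> \<xi> y = y + lprod y \<nu> *\<^sub>R l"
    by (simp_all add: lproj_def l_def scaleR_add_right add.assoc)
  moreover have "lprod l l = 0" "lprod x l = 0" "lprod l y = 0"
    using assms null_lprod by (simp_all add: l_def lprod_commute[of _ y])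
  ultimately show ?thesis
    by (simp add: lp.add_left lp.add_right lp.scaleR_left lp.scaleR_right)
qed

lemma vol_elem_neg_lproj:
  assumes "\<forall>i<k. lprod (y i) (\<nu> + \<xi>) = 0"
  shows "vol_elem k lprod (\<lambda>i. - lproj \<nu> \<xi> (y i)) = vol_elem k lprod y"
  unfolding vol_elem_def
  by (intro arg_cong[where f = sqrt] ndet_cong) (simp add: assms lprod_lproj lp.minus_left lp.minus_right)

end

lemma lprod_const_derivative:
  assumes "\<And>s. lprod (a s) (b s) = k"
    and "(a has_vector_derivative a') (at 0)" "(b has_vector_derivative b') (at 0)"
  shows "lprod (a 0) b' + lprod a' (b 0) = 0"
proof -
  have "((\<lambda>s. lprod (a s) (b s)) has_vector_derivative (lprod (a 0) b' + lprod a' (b 0))) (at 0)"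
    by (rule lp.has_vector_derivative[OF assms(2,3)])
  moreover have "((\<lambda>s. lprod (a s) (b s)) has_vector_derivative 0) (at 0)"
    using assms(1) by simp
  ultimately show ?thesis by (rule vector_derivative_unique_at)
qed

lemma has_vector_derivative_compose_derivative:
  assumes "(c has_vector_derivative c') (at x)" "(F has_derivative F') (at (c x))"
  shows "((\<lambda>s. F (c s)) has_vector_derivative F' c') (at x)"
proof -
  have "(F \<circ> c has_derivative F' \<circ> (\<lambda>h. h *\<^sub>R c')) (at x)"
    using diff_chain_at[OF assms(1)[unfolded has_vector_derivative_def] assms(2)] .
  moreover have "F' \<circ> (\<lambda>h. h *\<^sub>R c') = (\<lambda>h. h *\<^sub>R F' c')"
    using has_derivative_linear[OF assms(2)] by (auto simp: linear_cmul)
  ultimately show ?thesis unfolding has_vector_derivative_def by (simp add: comp_def)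
qed

lemma ltilde_differentiable:
  assumes "fst x \<noteq> 0"
  shows "ltilde differentiable (at x)"
  unfolding ltilde_def[abs_def]
  by (intro differentiable_scaleR differentiable_divide differentiable_const differentiable_ident assms)
    (simp add: bounded_linear_imp_differentiable bounded_linear_fst)

lemma lprod_ltilde: "lprod (ltilde y) (ltilde y) = lprod y y / (fst y)\<^sup>2"
  by (simp add: ltilde_def lp.scaleR_left lp.scaleR_right power2_eq_square)

lemma smooth_on_differentiable: "smooth_on S f \<Longrightarrow> x \<in> S \<Longrightarrow> f differentiable (at x)"
  using iter_dd.simps(1) unfolding smooth_on_def by metis

lemma smooth_on_derivative_differentiable:
  "smooth_on S f \<Longrightarrow> x \<in> S \<Longrightarrow> (\<lambda>y. frechet_derivative f (at y) v) differentiable (at x)"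
  using iter_dd.simps(2)[of v "[]" f] unfolding smooth_on_def by (metis iter_dd.simps(1))

locale unit_normal_frame =
  fixes U :: "'a::euclidean_space set" and X :: "'a \<Rightarrow> 'n::finite lor" and nT :: "'a \<Rightarrow> 'n lor"
    and u :: 'a and \<xi> :: "'n lor"
  assumes embedding: "spacelike_embedding U X"
    and normal_field: "future_unit_timelike_normal U X nT"
    and base_point: "u \<in> U"
    and fibre_point: "\<xi> \<in> N1_fib X nT u"
begin

abbreviation DX :: "'a \<Rightarrow> 'n lor" where
  "DX \<equiv> dX X u"

definition dN :: "'a \<Rightarrow> 'n lor" where
  "dN = frechet_derivative nT (at u)"

definition ddX :: "'a \<Rightarrow> 'a \<Rightarrow> 'n lor" where
  "ddX w = frechet_derivative (\<lambda>y. dX X y w) (at u)"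

definition dtilde :: "'n lor \<Rightarrow> 'n lor" where
  "dtilde = frechet_derivative ltilde (at (nT u + \<xi>))"

lemma X_has_derivative: "(X has_derivative DX) (at u)"
  unfolding dX_def frechet_derivative_works[symmetric]
  using embedding base_point smooth_on_differentiable by (auto simp: spacelike_embedding_def)

lemma nT_has_derivative: "(nT has_derivative dN) (at u)"
  unfolding dN_def frechet_derivative_works[symmetric]
  using normal_field base_point smooth_on_differentiable by (auto simp: future_unit_timelike_normal_def)

lemma dX_has_derivative: "((\<lambda>y. dX X y w) has_derivative ddX w) (at u)"
  unfolding ddX_def frechet_derivative_works[symmetric] dX_def
  using embedding base_point smooth_on_derivative_differentiable by (auto simp: spacelike_embedding_def)

lemma linear_dN: "linear dN"
  using nT_has_derivative by (rule has_derivative_linear)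

lemma linear_ddX: "linear (ddX w)"
  using dX_has_derivative by (rule has_derivative_linear)

sublocale lorentz_pair "nT u" \<xi>
  using normal_field fibre_point base_point
  by unfold_locales (auto simp: future_unit_timelike_normal_def N1_fib_def)

sublocale spacelike_linear DX
  by (rule spacelike_linear.intro[OF has_derivative_linear[OF X_has_derivative]])
    (use embedding base_point in \<open>auto simp: spacelike_embedding_def\<close>)

lemma ltilde_has_derivative: "(ltilde has_derivative dtilde) (at (nT u + \<xi>))"
  using ltilde_differentiable[OF fst_null_nonzero] unfolding dtilde_def
  by (simp add: frechet_derivative_works)

lemma normal_lprod_DX: "z \<in> normal_sp X u \<Longrightarrow> lprod z (DX a) = 0"
  by (auto simp: normal_sp_def tangent_sp_def)

lemma DX_in_lorth: "DX a \<in> lorth (nT u) \<xi>"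
  using normal_field base_point fibre_point normal_lprod_DX
  by (auto simp: lorth_def future_unit_timelike_normal_def N1_fib_def lprod_commute[of "DX a"])

lemma TN1_id_eq_lorth: "TN1_id X nT u \<xi> = lorth (nT u) \<xi>"
proof
  show "TN1_id X nT u \<xi> \<subseteq> lorth (nT u) \<xi>"
  proof
    fix z assume "z \<in> TN1_id X nT u \<xi>"
    then obtain a \<eta> where "z = DX a + \<eta>" "lprod \<eta> \<xi> = 0" "lprod \<eta> (nT u) = 0"
      unfolding TN1_id_def tangent_sp_def by blast
    then show "z \<in> lorth (nT u) \<xi>"
      using DX_in_lorth[of a] by (simp add: lorth_def lp.add_left)
  qed
next
  show "lorth (nT u) \<xi> \<subseteq> TN1_id X nT u \<xi>"
  proof
    fix z assume z: "z \<in> lorth (nT u) \<xi>"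
    define \<eta> where "\<eta> = z - DX (tan_coord z)"
    have "\<eta> \<in> normal_sp X u"
      using lprod_diff_tan_coord[of z] by (auto simp: \<eta>_def normal_sp_def tangent_sp_def lprod_commute)
    moreover have "lprod \<eta> \<xi> = 0" "lprod \<eta> (nT u) = 0"
      using z DX_in_lorth[of "tan_coord z"] by (auto simp: \<eta>_def lorth_def lp.diff_left)
    moreover have "z = DX (tan_coord z) + \<eta>" by (simp add: \<eta>_def)
    ultimately show "z \<in> TN1_id X nT u \<xi>"
      unfolding TN1_id_def tangent_sp_def by blast
  qed
qed

lemma Pi_tau_eq_lproj: "Pi_tau X nT u \<xi> z = lproj (nT u) \<xi> z"
  unfolding Pi_tau_def TN1_id_eq_lorth
  using lproj_in_lorth diff_lproj_in_span lproj_unique by blast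

text \<open>The velocities of curves in \<open>N\<^sub>1(M)[n\<^sup>T]\<close> satisfy the linearised constraints
  \<open>\<langle>e, e\<rangle> = 1\<close>, \<open>\<langle>e, n\<^sup>T\<circ>c\<rangle> = 0\<close> and \<open>\<langle>e, dX\<^sub>c w\<rangle> = 0\<close>.\<close>
definition TN1_lin :: "('n lor \<times> 'n lor) set" where
  "TN1_lin = (\<lambda>p. (DX (fst p), snd p)) ` {p. lprod (snd p) \<xi> = 0 \<and>
      lprod (snd p) (nT u) + lprod \<xi> (dN (fst p)) = 0 \<and>
      (\<forall>w. lprod (snd p) (DX w) + lprod \<xi> (ddX w (fst p)) = 0)}"

definition dLG :: "'n lor \<times> 'n lor \<Rightarrow> 'n lor" where
  "dLG x = dtilde (dN (tan_coord (fst x)) + snd x)"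

lemma N1_curve_velocity:
  assumes "N1_curve U X nT u \<xi> c e"
  shows "vector_derivative (X \<circ> c) (at 0) = DX (vector_derivative c (at 0))"
    and "(DX (vector_derivative c (at 0)), vector_derivative e (at 0)) \<in> TN1_lin"
proof -
  have c0: "c 0 = u" and e0: "e 0 = \<xi>" and eN: "\<And>s. e s \<in> N1_fib X nT (c s)"
    and "c differentiable (at 0)" "e differentiable (at 0)"
    using assms unfolding N1_curve_def by auto
  then have c': "(c has_vector_derivative vector_derivative c (at 0)) (at 0)"
    and e': "(e has_vector_derivative vector_derivative e (at 0)) (at 0)"
    by (simp_all add: vector_derivative_works)
  define a where "a = vector_derivative c (at 0)"
  define \<eta> where "\<eta> = vector_derivative e (at 0)"
  have "((\<lambda>s. X (c s)) has_vector_derivative DX a) (at 0)"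
    using has_vector_derivative_compose_derivative[OF c'] X_has_derivative by (simp add: c0 a_def)
  then show "vector_derivative (X \<circ> c) (at 0) = DX a"
    by (simp add: comp_def vector_derivative_at)
  have nT': "((\<lambda>s. nT (c s)) has_vector_derivative dN a) (at 0)"
    using has_vector_derivative_compose_derivative[OF c'] nT_has_derivative by (simp add: c0 a_def)
  have dX': "((\<lambda>s. dX X (c s) w) has_vector_derivative ddX w a) (at 0)" for w
    using has_vector_derivative_compose_derivative[OF c', of "\<lambda>y. dX X y w"] dX_has_derivative
    by (simp add: c0 a_def)
  have "lprod (e s) (e s) = 1" "lprod (e s) (nT (c s)) = 0" "lprod (e s) (dX X (c s) w) = 0" for s w
    using eN[of s] by (auto simp: N1_fib_def normal_sp_def tangent_sp_def)
  from lprod_const_derivative[OF this(1) e' e'] lprod_const_derivative[OF this(2) e' nT']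
    lprod_const_derivative[OF this(3) e' dX']
  have "lprod \<eta> \<xi> = 0" "lprod \<eta> (nT u) + lprod \<xi> (dN a) = 0"
    "\<And>w. lprod \<eta> (DX w) + lprod \<xi> (ddX w a) = 0"
    by (simp_all add: c0 e0 \<eta>_def lprod_commute[of \<xi>] add.commute)
  then show "(DX a, \<eta>) \<in> TN1_lin"
    unfolding TN1_lin_def by (auto intro: image_eqI[of _ _ "(a, \<eta>)"])
qed

lemma N1_curve_LGt_derivative:
  assumes "N1_curve U X nT u \<xi> c e"
  shows "vector_derivative (\<lambda>s. LGt U X nT (X (c s), e s)) (at 0)
           = dLG (DX (vector_derivative c (at 0)), vector_derivative e (at 0))"
    and "lprod (dLG (DX (vector_derivative c (at 0)), vector_derivative e (at 0))) (nT u + \<xi>) = 0"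
proof -
  have c0: "c 0 = u" and e0: "e 0 = \<xi>" and cU: "\<And>s. c s \<in> U"
    and eN: "\<And>s. e s \<in> N1_fib X nT (c s)"
    and "c differentiable (at 0)" "e differentiable (at 0)"
    using assms unfolding N1_curve_def by auto
  then have c': "(c has_vector_derivative vector_derivative c (at 0)) (at 0)"
    and e': "(e has_vector_derivative vector_derivative e (at 0)) (at 0)"
    by (simp_all add: vector_derivative_works)
  define y where "y = dN (vector_derivative c (at 0)) + vector_derivative e (at 0)"
  have y: "((\<lambda>s. nT (c s) + e s) has_vector_derivative y) (at 0)"
    using has_vector_derivative_add[OF has_vector_derivative_compose_derivative[OF c'] e']
      nT_has_derivative by (simp add: c0 y_def)
  have LG': "((\<lambda>s. ltilde (nT (c s) + e s)) has_vector_derivative dtilde y) (at 0)"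
    using has_vector_derivative_compose_derivative[OF y, of ltilde dtilde] ltilde_has_derivative
    by (simp add: c0 e0)
  have dLG_eq: "dLG (DX (vector_derivative c (at 0)), vector_derivative e (at 0)) = dtilde y"
    by (simp add: dLG_def y_def)
  have "LGt U X nT (X (c s), e s) = ltilde (nT (c s) + e s)" for s
    by (simp add: LGt_def inv_into_f_f[OF _ cU] spacelike_embedding_def embedding[unfolded spacelike_embedding_def])
  then show "vector_derivative (\<lambda>s. LGt U X nT (X (c s), e s)) (at 0)
               = dLG (DX (vector_derivative c (at 0)), vector_derivative e (at 0))"
    using LG' by (simp add: dLG_eq vector_derivative_at)
  have "lprod (nT (c s) + e s) (nT (c s) + e s) = 0" for s
  proof -
    have "lprod (nT (c s)) (nT (c s)) = -1"
      using normal_field cU by (simp add: future_unit_timelike_normal_def)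
    moreover have "lprod (e s) (e s) = 1" "lprod (e s) (nT (c s)) = 0"
      using eN[of s] by (simp_all add: N1_fib_def)
    ultimately show ?thesis by (simp add: lp.add_left lp.add_right lprod_commute[of "nT (c s)" "e s"])
  qed
  then have "lprod (ltilde (nT (c s) + e s)) (ltilde (nT (c s) + e s)) = 0" for s
    by (simp add: lprod_ltilde)
  from lprod_const_derivative[OF this LG' LG']
  have "2 / fst (nT u + \<xi>) * lprod (dtilde y) (nT u + \<xi>) = 0"
    by (simp add: c0 e0 ltilde_def lp.scaleR_left lp.scaleR_right lprod_commute[of "nT u + \<xi>"])
  then show "lprod (dLG (DX (vector_derivative c (at 0)), vector_derivative e (at 0))) (nT u + \<xi>) = 0"
    using fst_null_nonzero by (simp add: dLG_eq)
qed

lemma TN1_subset_TN1_lin: "TN1 U X nT u \<xi> \<subseteq> TN1_lin"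
  using N1_curve_velocity unfolding TN1_def by auto

lemma dLGt_eq_dLG:
  assumes "x \<in> TN1 U X nT u \<xi>"
  shows "dLGt U X nT u \<xi> x = dLG x"
proof -
  define P where "P d \<longleftrightarrow> (\<exists>c e. N1_curve U X nT u \<xi> c e \<and>
      x = (vector_derivative (X \<circ> c) (at 0), vector_derivative e (at 0)) \<and>
      d = vector_derivative (\<lambda>s. LGt U X nT (X (c s), e s)) (at 0))" for d
  have "\<exists>d. P d" using assms unfolding TN1_def P_def by blast
  then have "P (dLGt U X nT u \<xi> x)"
    unfolding dLGt_def P_def[symmetric] by (rule someI_ex)
  then show ?thesis
    unfolding P_def using N1_curve_velocity(1) N1_curve_LGt_derivative(1) by auto
qed

lemma dLG_lprod_null:
  assumes "x \<in> TN1 U X nT u \<xi>"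
  shows "lprod (dLG x) (nT u + \<xi>) = 0"
  using assms N1_curve_velocity(1) N1_curve_LGt_derivative(2) unfolding TN1_def by auto

lemma linear_dLG: "linear dLG"
proof -
  have "linear dtilde" using ltilde_has_derivative by (rule has_derivative_linear)
  with linear_dN show ?thesis
    by (intro linearI) (simp_all add: dLG_def linear_add linear_cmul linear_tan_coord scaleR_add_right)
qed


lemma subspace_TN1_lin: "subspace TN1_lin"
proof -
  have map: "linear (\<lambda>p. (DX (fst p), snd p))"
    by (rule linearI) (auto simp: linear_add[OF linear] linear_cmul[OF linear])
  have "subspace {p. lprod (snd p) \<xi> = 0 \<and> lprod (snd p) (nT u) + lprod \<xi> (dN (fst p)) = 0 \<and>
      (\<forall>w. lprod (snd p) (DX w) + lprod \<xi> (ddX w (fst p)) = 0)}"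
    unfolding subspace_def
    by (auto simp: linear_add[OF linear_dN] linear_cmul[OF linear_dN] linear_0[OF linear_dN]
        linear_add[OF linear_ddX] linear_cmul[OF linear_ddX] linear_0[OF linear_ddX] lp.add_left lp.add_right lp.scaleR_left lp.scaleR_right
        lp.zero_left lp.zero_right add_ac simp flip: distrib_left)
  with map show ?thesis
    unfolding TN1_lin_def by (rule linear_subspace_image)
qed

text \<open>An element of \<open>TN1_lin\<close> is determined by its tangent part up to a vector of
  \<open>lorth (nT u) \<xi>\<close> orthogonal to the tangent space; this gives an injection into \<open>lorth (nT u) \<xi>\<close>.\<close>
lemma dim_TN1_lin_le: "dim TN1_lin \<le> dim (lorth (nT u) \<xi>)"
proof -
  define nor where "nor z = z - DX (tan_coord z)" for z
  define \<phi> where "\<phi> x = fst x + nor (lproj (nT u) \<xi> (snd x))" for x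
  have lin\<phi>: "linear \<phi>"
    by (rule linearI) (simp_all add: \<phi>_def nor_def linear_add[OF linear_lproj] linear_cmul[OF linear_lproj]
        linear_add[OF linear_tan_coord] linear_cmul[OF linear_tan_coord] linear_add[OF linear]
        linear_cmul[OF linear] algebra_simps)
  have "\<phi> ` TN1_lin \<subseteq> lorth (nT u) \<xi>"
  proof
    fix z assume "z \<in> \<phi> ` TN1_lin"
    then obtain a \<eta> where "z = \<phi> (DX a, \<eta>)" unfolding TN1_lin_def by auto
    then show "z \<in> lorth (nT u) \<xi>" unfolding \<phi>_def nor_def
      by (simp add: subspace_add[OF subspace_lorth] subspace_diff[OF subspace_lorth] DX_in_lorth lproj_in_lorth)
  qed
  moreover have "inj_on \<phi> TN1_lin"
    unfolding linear_inj_on_iff_eq_0[OF lin\<phi> subspace_TN1_lin]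
  proof (intro ballI impI)
    fix x assume "x \<in> TN1_lin" and x0: "\<phi> x = 0"
    then obtain a \<eta> where x: "x = (DX a, \<eta>)" and \<eta>: "lprod \<eta> \<xi> = 0"
      "lprod \<eta> (nT u) + lprod \<xi> (dN a) = 0" "\<And>w. lprod \<eta> (DX w) + lprod \<xi> (ddX w a) = 0"
      unfolding TN1_lin_def by auto
    define r where "r = nor (lproj (nT u) \<xi> \<eta>)"
    have r: "lprod r (DX w) = 0" for w unfolding r_def nor_def by (rule lprod_diff_tan_coord)
    have "r = - DX a" using x0 by (simp add: x \<phi>_def r_def eq_neg_iff_add_eq_0 add.commute)
    then have "lprod (DX a) (DX a) = 0" using r[of a] by (simp add: lp.minus_left)
    then have a0: "a = 0" using positive by force
    have \<eta>0: "lprod \<eta> \<xi> = 0" "lprod \<eta> (nT u) = 0" "\<And>w. lprod \<eta> (DX w) = 0"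
      using \<eta> by (simp_all add: a0 linear_0[OF linear_dN] linear_0[OF linear_ddX] lp.zero_right)
    then have "lproj (nT u) \<xi> \<eta> = \<eta>" by (simp add: lproj_def)
    moreover have "tan_coord \<eta> = 0" by (rule tan_coord_unique) (simp add: \<eta>0 linear_0[OF linear])
    ultimately have "r = \<eta>" by (simp add: r_def nor_def linear_0[OF linear])
    then show "x = 0" using \<open>r = - DX a\<close> a0 by (simp add: x linear_0[OF linear] zero_prod_def)
  qed
  ultimately show ?thesis
    using dim_image_eq[OF lin\<phi> _ ] subspace_TN1_lin dim_subset
    by (metis span_eq_iff)
qed

lemma inj_on_TN1_lin:
  assumes "linear \<iota>" "lorth (nT u) \<xi> \<subseteq> \<iota> ` TN1 U X nT u \<xi>"
  shows "inj_on \<iota> TN1_lin"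
proof (rule inj_on_if_dim_le_dim_image[OF assms(1) subspace_TN1_lin])
  have "lorth (nT u) \<xi> \<subseteq> \<iota> ` TN1_lin" using assms(2) TN1_subset_TN1_lin by blast
  then show "dim TN1_lin \<le> dim (\<iota> ` TN1_lin)"
    using dim_TN1_lin_le dim_subset order_trans by blast
qed

lemma ex_linear_neg_Pi_tau_dLGt:
  assumes "linear \<iota>" "bij_betw \<iota> (TN1 U X nT u \<xi>) (lorth (nT u) \<xi>)"
  obtains F where "linear F" "F ` lorth (nT u) \<xi> \<subseteq> lorth (nT u) \<xi>"
    "\<And>x. x \<in> TN1 U X nT u \<xi> \<Longrightarrow> F (\<iota> x) = - lproj (nT u) \<xi> (dLGt U X nT u \<xi> x)"
    "\<And>z. z \<in> lorth (nT u) \<xi> \<Longrightarrow>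
       - Pi_tau X nT u \<xi> (dLGt U X nT u \<xi> (inv_into (TN1 U X nT u \<xi>) \<iota> z)) = F z"
proof -
  have \<iota>_TN1: "\<iota> ` TN1 U X nT u \<xi> = lorth (nT u) \<xi>" and inj_TN1: "inj_on \<iota> (TN1 U X nT u \<xi>)"
    using assms(2) by (simp_all add: bij_betw_def)
  then have "inj_on \<iota> TN1_lin" using inj_on_TN1_lin[OF assms(1)] by simp
  then obtain L where "linear L" and L: "\<forall>x\<in>TN1_lin. L (\<iota> x) = x"
    using linear_exists_left_inverse_on[OF assms(1) subspace_TN1_lin] by blast
  define F where "F z = - lproj (nT u) \<xi> (dLG (L z))" for z
  have "linear F"
    unfolding F_def[abs_def]
    using linear_compose[OF linear_compose[OF \<open>linear L\<close> linear_dLG] linear_lproj[of "nT u" \<xi>]]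
    by (simp add: comp_def linear_compose_neg)
  moreover have "F ` lorth (nT u) \<xi> \<subseteq> lorth (nT u) \<xi>"
    unfolding F_def using subspace_neg[OF subspace_lorth lproj_in_lorth] by blast
  moreover have F_\<iota>: "F (\<iota> x) = - lproj (nT u) \<xi> (dLGt U X nT u \<xi> x)" if "x \<in> TN1 U X nT u \<xi>" for x
    using that L TN1_subset_TN1_lin dLGt_eq_dLG by (auto simp: F_def)
  moreover have "- Pi_tau X nT u \<xi> (dLGt U X nT u \<xi> (inv_into (TN1 U X nT u \<xi>) \<iota> z)) = F z"
    if z: "z \<in> lorth (nT u) \<xi>" for z
  proof -
    obtain x where x: "x \<in> TN1 U X nT u \<xi>" "z = \<iota> x" using z \<iota>_TN1 by blast
    then have "inv_into (TN1 U X nT u \<xi>) \<iota> z = x" using inv_into_f_f[OF inj_TN1] by simp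
    then show ?thesis using F_\<iota> x by (simp add: Pi_tau_eq_lproj)
  qed
  ultimately show thesis using that by blast
qed

end

theorem theorem6p1:
  fixes U :: "(real ^ 's) set"
    and X :: "real ^ 's \<Rightarrow> 'n::finite lor"
    and nT :: "real ^ 's \<Rightarrow> 'n lor"
    and \<iota> :: "'n lor \<times> 'n lor \<Rightarrow> 'n lor"
    and u :: "real ^ 's" and \<xi> :: "'n lor"
    and t :: "nat \<Rightarrow> 'n lor \<times> 'n lor"
  assumes emb: "spacelike_embedding U X"
    and nT: "future_unit_timelike_normal U X nT"
    and pt: "u \<in> U" "\<xi> \<in> N1_fib X nT u"
    and ident: "linear \<iota>" "bij_betw \<iota> (TN1 U X nT u \<xi>) (TN1_id X nT u \<xi>)"
    and tang: "\<forall>i < CARD('n) - 1. t i \<in> TN1 U X nT u \<xi>"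
  shows "vol_elem (CARD('n) - 1) lprod (\<lambda>i. dLGt U X nT u \<xi> (t i))
       = \<bar>sub_det (TN1_id X nT u \<xi>)
            (\<lambda>z. - Pi_tau X nT u \<xi> (dLGt U X nT u \<xi> (inv_into (TN1 U X nT u \<xi>) \<iota> z)))\<bar>
         * vol_elem (CARD('n) - 1) (\<lambda>a b. lprod (\<iota> a) (\<iota> b)) t"
proof -
  interpret unit_normal_frame U X nT u \<xi>
    using emb nT pt by unfold_locales
  define W where "W = TN1_id X nT u \<xi>"
  have W: "W = lorth (nT u) \<xi>" "subspace W" "dim W = CARD('n) - 1"
    using TN1_id_eq_lorth subspace_lorth dim_lorth by (simp_all add: W_def)
  obtain F where "linear F" "F ` W \<subseteq> W"
    and F_\<iota>: "\<And>x. x \<in> TN1 U X nT u \<xi> \<Longrightarrow> F (\<iota> x) = - lproj (nT u) \<xi> (dLGt U X nT u \<xi> x)"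
    and F_eq: "\<And>z. z \<in> W \<Longrightarrow>
      - Pi_tau X nT u \<xi> (dLGt U X nT u \<xi> (inv_into (TN1 U X nT u \<xi>) \<iota> z)) = F z"
    using ex_linear_neg_Pi_tau_dLGt[OF ident(1)] ident(2) unfolding W(1) W_def TN1_id_eq_lorth by blast
  have "vol_elem (dim W) lprod (\<lambda>i. dLGt U X nT u \<xi> (t i))
      = vol_elem (dim W) lprod (\<lambda>i. - lproj (nT u) \<xi> (dLGt U X nT u \<xi> (t i)))"
    using tang by (intro vol_elem_neg_lproj[symmetric]) (simp add: W(3) dLGt_eq_dLG dLG_lprod_null)
  also have "\<dots> = vol_elem (dim W) lprod (\<lambda>i. F (\<iota> (t i)))"
    using tang by (intro vol_elem_cong) (simp add: W(3) F_\<iota>)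
  also have "\<dots> = \<bar>sub_det W F\<bar> * vol_elem (dim W) lprod (\<lambda>i. \<iota> (t i))"
    by (rule vol_elem_linear_image[OF bounded_bilinear_lprod \<open>linear F\<close> W(2) \<open>F ` W \<subseteq> W\<close>])
      (use tang ident(2) in \<open>auto simp: W(3) bij_betw_def simp flip: W_def\<close>)
  also have "sub_det W F
      = sub_det W (\<lambda>z. - Pi_tau X nT u \<xi> (dLGt U X nT u \<xi> (inv_into (TN1 U X nT u \<xi>) \<iota> z)))"
    using W(2) F_eq by (rule sub_det_cong[symmetric])
  finally show ?thesis
    unfolding W_def[symmetric] W(3)[symmetric] by (simp add: vol_elem_def)
qed

end
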